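(* Let $(Y^*,Y,X)$ be random variables with $Y^*\in\{0,1\}$ (true, unobserved outcome), $Y\in\{0,1\}$ (observed, possibly misreported outcome) and $X=(\tilde X,Z)\in\mathcal X$, where $\tilde X\in\tilde{\mathcal X}$ and $Z$ takes values in a finite set $\mathcal Z=\{z_1,\dots,z_k\}$. Write $p(x)=\Pr(Y=1\mid X=x)$, $p^*(x)=\Pr(Y^*=1\mid X=x)$, $p(\tilde x,z)=p(x)$ for $x=(\tilde x,z)$, and $$\underline{p}_z(\tilde x)=\inf_{z\in\mathcal Z}p(\tilde x,z),\qquad \bar p_z(\tilde x)=\sup_{z\in\mathcal Z}p(\tilde x,z).$$ Assume: (i) (Exclusion) for every $x=(\tilde x,z)\in\mathcal X$ and $y\in\{0,1\}$, $\Pr(Y=1-y\mid Y^*=y,X=x)=\Pr(Y=1-y\mid Y^*=y,\tilde X=\tilde x)$; (ii) (Degree of misreporting) for every $\tilde x\in\tilde{\mathcal X}$, $\Pr(Y=0\mid Y^*=1,\tilde x)+\Pr(Y=1\mid Y^*=0,\tilde x)\le 1$; (iii) (Boundary condition) for every $\tilde x\in\tilde{\mathcal X}$, $\bar p_z(\tilde x)>0$ and $\underline p_z(\tilde x)<1$. Then for every $x=(\tilde x,z)\in\mathcal X$, $p^*(x)\in[L_1(x),U_1(x)]$, where $$L_1(x)=\frac{p(x)-\underline p_z(\tilde x)}{1-\underline p_z(\tilde x)},\qquad U_1(x)=\frac{p(x)}{\bar p_z(\tilde x)},$$ and these bounds are sharp (no tighter bounds on $p^*(x)$ are implied by the assumptions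 and the distribution of the observed variables $(Y,X)$).
   Context: $Z$ is an instrument affecting the true outcome but not the misreporting probabilities $\Pr(Y=1-y\mid Y^*=y,\cdot)$. Conditioning on $\tilde x$ means conditioning on $\tilde X=\tilde x$. *)

theory Defs
  imports "HOL-Probability.Probability"
begin

text \<open>Outcomes are booleans (True = 1). For each covariate value
  x = (xt, z), K x is the conditional joint law of (Y*, Y) given X = x;
  the first component is the true outcome Y*, the second the observed Y.\<close>

definition pstar :: "('x \<Rightarrow> (bool \<times> bool) pmf) \<Rightarrow> 'x \<Rightarrow> real" where
  "pstar K x = measure_pmf.prob (K x) {w. fst w}"

definition pobs :: "('x \<Rightarrow> (bool \<times> bool) pmf) \<Rightarrow> 'x \<Rightarrow> real" where
  "pobs K x = measure_pmf.prob (K x) {w. snd w}"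

definition ptrue :: "('x \<Rightarrow> (bool \<times> bool) pmf) \<Rightarrow> 'x \<Rightarrow> bool \<Rightarrow> real" where
  "ptrue K x y = measure_pmf.prob (K x) {w. fst w = y}"

definition pmisjoint :: "('x \<Rightarrow> (bool \<times> bool) pmf) \<Rightarrow> 'x \<Rightarrow> bool \<Rightarrow> real" where
  "pmisjoint K x y = measure_pmf.prob (K x) {w. fst w = y \<and> snd w = (\<not> y)}"

text \<open>Misreporting model: m y xt = Pr(Y = 1 - y | Y* = y, Xt = xt).
  (i) Exclusion: Pr(Y = 1-y | Y* = y, X = (xt,z)) = m y xt for all z, written
  multiplicatively so that it is meaningful also when Pr(Y* = y | X = x) = 0;
  (ii) degree of misreporting: m 1 xt + m 0 xt \<le> 1.\<close>
definition misreport_model ::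
  "'a set \<Rightarrow> 'z set \<Rightarrow> ('a \<times> 'z \<Rightarrow> (bool \<times> bool) pmf) \<Rightarrow> (bool \<Rightarrow> 'a \<Rightarrow> real) \<Rightarrow> bool" where
  "misreport_model Xt Zs K m \<longleftrightarrow>
     (\<forall>xt\<in>Xt. \<forall>y. 0 \<le> m y xt \<and> m y xt \<le> 1) \<and>
     (\<forall>xt\<in>Xt. \<forall>z\<in>Zs. \<forall>y. pmisjoint K (xt, z) y = ptrue K (xt, z) y * m y xt) \<and>
     (\<forall>xt\<in>Xt. m True xt + m False xt \<le> 1)"

definition plow :: "('a \<times> 'z \<Rightarrow> real) \<Rightarrow> 'z set \<Rightarrow> 'a \<Rightarrow> real" where
  "plow p Zs xt = Inf ((\<lambda>z. p (xt, z)) ` Zs)"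

definition phigh :: "('a \<times> 'z \<Rightarrow> real) \<Rightarrow> 'z set \<Rightarrow> 'a \<Rightarrow> real" where
  "phigh p Zs xt = Sup ((\<lambda>z. p (xt, z)) ` Zs)"

definition L1 :: "('a \<times> 'z \<Rightarrow> real) \<Rightarrow> 'z set \<Rightarrow> 'a \<times> 'z \<Rightarrow> real" where
  "L1 p Zs x = (p x - plow p Zs (fst x)) / (1 - plow p Zs (fst x))"

definition U1 :: "('a \<times> 'z \<Rightarrow> real) \<Rightarrow> 'z set \<Rightarrow> 'a \<times> 'z \<Rightarrow> real" where
  "U1 p Zs x = p x / phigh p Zs (fst x)"

end

theory Submission
  imports Defs
begin

text \<open>Fix a stratum \<open>xt\<close> and write \<open>a = m True xt\<close>, \<open>b = m False xt\<close> for the two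
  misreporting rates. By exclusion, \<open>p(xt,z) = b + p\<^sup>*(xt,z) (1 - a - b)\<close> for every \<open>z\<close>: an
  affine image of \<open>[0,1]\<close> inside \<open>[b, 1 - a]\<close>. Hence \<open>b \<le> inf\<^sub>z p\<close> and \<open>sup\<^sub>z p \<le> 1 - a\<close>,
  and inverting the affine relation gives \<open>L1 \<le> p\<^sup>* \<le> U1\<close>. Conversely, any rates with
  \<open>a + b < 1\<close>, \<open>b \<le> inf\<^sub>z p\<close> and \<open>sup\<^sub>z p \<le> 1 - a\<close> reproduce the observed \<open>p\<close> on the whole
  stratum through \<open>p\<^sup>*(xt,z) = (p(xt,z) - b) / (1 - a - b)\<close>, and every \<open>t\<close> between the
  bounds is attained by such rates with one of them equal to zero.\<close>

lemma measure_pmf_prob_split: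
  "measure_pmf.prob M {w. P w} =
     measure_pmf.prob M {w. P w \<and> Q w} + measure_pmf.prob M {w. P w \<and> \<not> Q w}"
proof -
  have "{w. P w} = {w. P w \<and> Q w} \<union> {w. P w \<and> \<not> Q w}" by auto
  then show ?thesis by (simp add: measure_pmf.finite_measure_Union disjoint_iff)
qed

lemma ptrue_True: "ptrue K x True = pstar K x"
  by (simp add: ptrue_def pstar_def)

lemma ptrue_False: "ptrue K x False = 1 - pstar K x"
  using measure_pmf_prob_split[of "K x" "\<lambda>_. True" fst]
  by (simp add: ptrue_def pstar_def)

lemma pobs_eq_pstar_pmisjoint:
  "pobs K x = pstar K x - pmisjoint K x True + pmisjoint K x False"
  using measure_pmf_prob_split[of "K x" snd fst] measure_pmf_prob_split[of "K x" fst snd]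
  by (simp add: pobs_def pstar_def pmisjoint_def conj_commute)

lemma pobs_misreport_model:
  assumes "misreport_model Xt Zs K m" "xt \<in> Xt" "z \<in> Zs"
  shows "pobs K (xt, z) = m False xt + pstar K (xt, z) * (1 - m True xt - m False xt)"
proof -
  have "pmisjoint K (xt, z) y = ptrue K (xt, z) y * m y xt" for y
    using assms unfolding misreport_model_def by blast
  then show ?thesis
    by (simp add: pobs_eq_pstar_pmisjoint ptrue_True ptrue_False algebra_simps)
qed

definition misreport_pmf :: "real \<Rightarrow> real \<Rightarrow> real \<Rightarrow> (bool \<times> bool) pmf" where
  "misreport_pmf s a b =
     bernoulli_pmf s \<bind> (\<lambda>ys. map_pmf (Pair ys) (bernoulli_pmf (if ys then 1 - a else b)))"

lemma pmf_map_Pair: "pmf (map_pmf (Pair u) M) (v, y) = (if u = v then pmf M y else 0)"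
  by (simp add: pmf_map vimage_def measure_pmf_single)

lemma pmf_misreport_pmf:
  assumes "0 \<le> s" "s \<le> 1"
  shows "pmf (misreport_pmf s a b) (ys, y) =
           pmf (bernoulli_pmf s) ys * pmf (bernoulli_pmf (if ys then 1 - a else b)) y"
  using assms by (cases ys) (simp_all add: misreport_pmf_def pmf_bind pmf_map_Pair)

lemma misreport_pmf_probs:
  assumes K: "K x = misreport_pmf s a b"
    and "0 \<le> s" "s \<le> 1" "0 \<le> a" "a \<le> 1" "0 \<le> b" "b \<le> 1"
  shows "pstar K x = s"
    and "pobs K x = b + s * (1 - a - b)"
    and "pmisjoint K x y = ptrue K x y * (if y then a else b)"
proof -
  have fst_set: "{w. fst w = y} = {y} \<times> UNIV"
   and fst_True_set: "{w. fst w} = {True} \<times> UNIV"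
   and snd_set: "{w. snd w} = UNIV \<times> {True}"
   and mis_set: "{w. fst w = y \<and> snd w = (\<not> y)} = {(y, \<not> y)}" for y :: bool
    by auto
  note expand = K measure_measure_pmf_finite sum.cartesian_product[symmetric] UNIV_bool
    pmf_misreport_pmf assms algebra_simps
  show "pstar K x = s"
    by (simp add: pstar_def fst_True_set expand)
  show "pobs K x = b + s * (1 - a - b)"
    by (simp add: pobs_def snd_set expand)
  show "pmisjoint K x y = ptrue K x y * (if y then a else b)"
    unfolding pmisjoint_def ptrue_def fst_set mis_set by (cases y) (simp_all add: expand)
qed

lemma plow_le: "finite Zs \<Longrightarrow> z \<in> Zs \<Longrightarrow> plow p Zs xt \<le> p (xt, z)"
  unfolding plow_def by (rule cInf_lower) auto

lemma le_plow: "Zs \<noteq> {} \<Longrightarrow> (\<And>z. z \<in> Zs \<Longrightarrow> c \<le> p (xt, z)) \<Longrightarrow> c \<le> plow p Zs xt"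
  unfolding plow_def by (rule cInf_greatest) auto

lemma phigh_ge: "finite Zs \<Longrightarrow> z \<in> Zs \<Longrightarrow> p (xt, z) \<le> phigh p Zs xt"
  unfolding phigh_def by (rule cSup_upper) auto

lemma phigh_le: "Zs \<noteq> {} \<Longrightarrow> (\<And>z. z \<in> Zs \<Longrightarrow> p (xt, z) \<le> c) \<Longrightarrow> phigh p Zs xt \<le> c"
  unfolding phigh_def by (rule cSup_least) auto

lemma misreport_obs_range:
  fixes a b s :: real
  assumes "0 \<le> s" "s \<le> 1" "a + b \<le> 1"
  shows "b \<le> b + s * (1 - a - b)" and "b + s * (1 - a - b) \<le> 1 - a"
proof -
  have "0 \<le> s * (1 - a - b)" and "s * (1 - a - b) \<le> 1 - a - b"
    using assms by (simp_all add: mult_left_le_one_le)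
  then show "b \<le> b + s * (1 - a - b)" and "b + s * (1 - a - b) \<le> 1 - a" by linarith+
qed

lemma pstar_bounds_of_rates:
  fixes a b s lo hi :: real
  assumes "0 \<le> a" "0 \<le> b" "b \<le> lo" "lo < 1" "0 < hi" "hi \<le> 1 - a" "0 \<le> s" "s \<le> 1"
  shows "(b + s * (1 - a - b) - lo) / (1 - lo) \<le> s" and "s \<le> (b + s * (1 - a - b)) / hi"
proof -
  have "s * (1 - lo) - (b + s * (1 - a - b) - lo) = (1 - s) * (lo - b) + s * a"
    by (simp add: algebra_simps)
  also have "\<dots> \<ge> 0" using assms by simp
  finally show "(b + s * (1 - a - b) - lo) / (1 - lo) \<le> s"
    using \<open>lo < 1\<close> by (simp add: divide_le_eq)
  have "b + s * (1 - a - b) - s * hi = s * (1 - a - hi) + (1 - s) * b"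
    by (simp add: algebra_simps)
  also have "\<dots> \<ge> 0" using assms by simp
  finally show "s \<le> (b + s * (1 - a - b)) / hi"
    using \<open>0 < hi\<close> by (simp add: le_divide_eq)
qed

lemma misreport_rates_exist:
  fixes lo hi p t :: real
  assumes "0 \<le> lo" "lo \<le> p" "p \<le> hi" "hi \<le> 1" "lo < 1" "0 < hi"
    and lower: "(p - lo) / (1 - lo) \<le> t" and upper: "t \<le> p / hi"
  obtains a b where "0 \<le> a" "0 \<le> b" "a + b < 1" "b \<le> lo" "hi \<le> 1 - a"
    and "p = b + t * (1 - a - b)"
proof -
  have lower': "p - lo \<le> t * (1 - lo)" using lower \<open>lo < 1\<close> by (simp add: divide_le_eq)
  have upper': "t * hi \<le> p" using upper \<open>0 < hi\<close> by (simp add: le_divide_eq)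
  show thesis
  proof (cases "t \<le> p")
    case True
    show thesis
    proof (cases "t = 1")
      case True
      with \<open>t \<le> p\<close> \<open>p \<le> hi\<close> \<open>hi \<le> 1\<close> have "p = 1" by simp
      with \<open>t = 1\<close> show thesis using that[of 0 0] assms by simp
    next
      case False
      have "t < 1" using \<open>t \<le> p\<close> \<open>p \<le> hi\<close> \<open>hi \<le> 1\<close> False by simp
      define b where "b = (p - t) / (1 - t)"
      have "b * (1 - t) = p - t" using \<open>t < 1\<close> by (simp add: b_def)
      then have "p = b + t * (1 - b)" by (simp add: algebra_simps)
      moreover have "b \<le> lo" using \<open>t < 1\<close> lower' by (simp add: b_def divide_le_eq algebra_simps)
      moreover have "0 \<le> b" using \<open>t < 1\<close> \<open>t \<le> p\<close> by (simp add: b_def)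
      ultimately show thesis using that[of 0 b] assms by simp
    qed
  next
    case False
    have "0 < t" using False \<open>0 \<le> lo\<close> \<open>lo \<le> p\<close> by simp
    moreover have "0 < p" using mult_pos_pos[OF \<open>0 < t\<close> \<open>0 < hi\<close>] upper' by linarith
    ultimately have "hi \<le> p / t" "0 < p / t" "p / t \<le> 1" and "p = t * (p / t)"
      using upper' False by (simp_all add: le_divide_eq mult.commute)
    then show thesis using that[of "1 - p / t" 0] \<open>0 \<le> lo\<close> by simp
  qed
qed

lemma misreport_rates:
  assumes "misreport_model Xt Zs K m" "xt \<in> Xt"
  shows "0 \<le> m True xt" "0 \<le> m False xt" "m True xt + m False xt \<le> 1"
  using assms unfolding misreport_model_def by auto

lemma pstar_bounds:
  assumes model: "misreport_model Xt Zs K m" and xt: "xt \<in> Xt" and z: "z \<in> Zs"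
    and hi: "phigh (pobs K) Zs xt > 0" and lo: "plow (pobs K) Zs xt < 1"
  shows "L1 (pobs K) Zs (xt, z) \<le> pstar K (xt, z)" and "pstar K (xt, z) \<le> U1 (pobs K) Zs (xt, z)"
proof -
  let ?a = "m True xt" and ?b = "m False xt"
  note rates = misreport_rates[OF model xt]
  have obs: "pobs K (xt, z') = ?b + pstar K (xt, z') * (1 - ?a - ?b)" if "z' \<in> Zs" for z'
    using pobs_misreport_model[OF model xt that] .
  have range: "?b \<le> pobs K (xt, z')" "pobs K (xt, z') \<le> 1 - ?a" if "z' \<in> Zs" for z'
    using misreport_obs_range[of "pstar K (xt, z')", OF _ _ rates(3)] obs[OF that]
    by (simp_all add: pstar_def)
  have "?b \<le> plow (pobs K) Zs xt" and "phigh (pobs K) Zs xt \<le> 1 - ?a"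
    using z range by (blast intro: le_plow phigh_le)+
  then show "L1 (pobs K) Zs (xt, z) \<le> pstar K (xt, z)" and "pstar K (xt, z) \<le> U1 (pobs K) Zs (xt, z)"
    using pstar_bounds_of_rates[OF rates(1,2) _ lo hi, of "pstar K (xt, z)"] obs[OF z]
    by (simp_all add: L1_def U1_def pstar_def)
qed

lemma misreport_model_update:
  assumes model: "misreport_model Xt Zs K m"
    and rates: "0 \<le> a" "0 \<le> b" "a + b \<le> 1" and s: "\<forall>z\<in>Zs. 0 \<le> s z \<and> s z \<le> 1"
  shows "misreport_model Xt Zs
           (\<lambda>(xt, z). if xt = xt0 then misreport_pmf (s z) a b else K (xt, z))
           (\<lambda>y xt. if xt = xt0 then (if y then a else b) else m y xt)"
    (is "misreport_model _ _ ?K' ?m'")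
  unfolding misreport_model_def
proof (intro conjI ballI allI)
  fix xt z y assume "xt \<in> Xt" "z \<in> Zs"
  then show "pmisjoint ?K' (xt, z) y = ptrue ?K' (xt, z) y * ?m' y xt"
    using model rates s misreport_pmf_probs(3)[of _ "(xt0, z)" "s z" a b]
    unfolding misreport_model_def by (cases "xt = xt0") (auto simp: pmisjoint_def ptrue_def)
qed (use model rates in \<open>auto simp: misreport_model_def\<close>)

lemma pstar_bounds_sharp:
  assumes fin: "finite Zs" and model: "misreport_model Xt Zs K m"
    and xt0: "xt0 \<in> Xt" and z0: "z0 \<in> Zs"
    and hi: "phigh (pobs K) Zs xt0 > 0" and lo: "plow (pobs K) Zs xt0 < 1"
    and t: "L1 (pobs K) Zs (xt0, z0) \<le> t" "t \<le> U1 (pobs K) Zs (xt0, z0)"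
  shows "\<exists>K' m'. misreport_model Xt Zs K' m' \<and>
           (\<forall>x'\<in>Xt \<times> Zs. pobs K' x' = pobs K x') \<and> pstar K' (xt0, z0) = t"
proof -
  define p where "p z = pobs K (xt0, z)" for z
  have p01: "0 \<le> p z" "p z \<le> 1" for z by (simp_all add: p_def pobs_def)
  have p_range: "plow (pobs K) Zs xt0 \<le> p z" "p z \<le> phigh (pobs K) Zs xt0" if "z \<in> Zs" for z
    using fin that by (simp_all add: p_def plow_le phigh_ge)
  have "0 \<le> plow (pobs K) Zs xt0" "phigh (pobs K) Zs xt0 \<le> 1"
    using z0 p01 by (auto simp: p_def intro: le_plow phigh_le)
  then obtain a b where ab: "0 \<le> a" "0 \<le> b" "a + b < 1"
      and b_lo: "b \<le> plow (pobs K) Zs xt0" and hi_a: "phigh (pobs K) Zs xt0 \<le> 1 - a"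
      and p_z0: "p z0 = b + t * (1 - a - b)"
    using misreport_rates_exist[OF _ p_range[OF z0] _ lo hi] t
    by (auto simp: L1_def U1_def p_def)
  define s where "s z = (p z - b) / (1 - a - b)" for z
  have p_s: "p z = b + s z * (1 - a - b)" for z
    using ab by (simp add: s_def)
  have s01: "\<forall>z\<in>Zs. 0 \<le> s z \<and> s z \<le> 1"
    using p_range b_lo hi_a ab by (fastforce simp: s_def divide_le_eq)
  define K' where "K' = (\<lambda>(xt, z). if xt = xt0 then misreport_pmf (s z) a b else K (xt, z))"
  define m' where "m' = (\<lambda>y xt. if xt = xt0 then (if y then a else b) else m y xt)"
  have "misreport_model Xt Zs K' m'"
    unfolding K'_def m'_def using misreport_model_update[OF model ab(1,2)] ab(3) s01 by simp
  moreover have "pobs K' (xt, z) = pobs K (xt, z)" if "z \<in> Zs" for xt z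
    using misreport_pmf_probs(2)[of K' "(xt0, z)" "s z" a b] s01 that ab p_s[of z]
    by (cases "xt = xt0") (simp_all add: K'_def p_def pobs_def)
  moreover have "s z0 = t"
    using p_s[of z0] p_z0 ab by simp
  then have "pstar K' (xt0, z0) = t"
    using misreport_pmf_probs(1)[of K' "(xt0, z0)" "s z0" a b] bspec[OF s01 z0] ab
    by (simp add: K'_def)
  ultimately show ?thesis by blast
qed

theorem proposition1:
  fixes Xt :: "'a set" and Zs :: "'z set"
    and K :: "'a \<times> 'z \<Rightarrow> (bool \<times> bool) pmf" and m :: "bool \<Rightarrow> 'a \<Rightarrow> real"
  assumes finZ: "finite Zs" and neZ: "Zs \<noteq> {}"
    and model: "misreport_model Xt Zs K m"
    and boundary: "\<forall>xt\<in>Xt. phigh (pobs K) Zs xt > 0 \<and> plow (pobs K) Zs xt < 1"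
  shows "\<forall>x\<in>Xt \<times> Zs.
           L1 (pobs K) Zs x \<le> pstar K x \<and> pstar K x \<le> U1 (pobs K) Zs x \<and>
           (\<forall>t. L1 (pobs K) Zs x \<le> t \<and> t \<le> U1 (pobs K) Zs x \<longrightarrow>
              (\<exists>K' m'. misreport_model Xt Zs K' m' \<and>
                 (\<forall>x'\<in>Xt \<times> Zs. pobs K' x' = pobs K x') \<and>
                 pstar K' x = t))"
proof
  fix x assume "x \<in> Xt \<times> Zs"
  then obtain xt z where x: "x = (xt, z)" and xt: "xt \<in> Xt" and z: "z \<in> Zs" by blast
  have hi: "phigh (pobs K) Zs xt > 0" and lo: "plow (pobs K) Zs xt < 1"
    using boundary xt by auto
  show "L1 (pobs K) Zs x \<le> pstar K x \<and> pstar K x \<le> U1 (pobs K) Zs x \<and>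
      (\<forall>t. L1 (pobs K) Zs x \<le> t \<and> t \<le> U1 (pobs K) Zs x \<longrightarrow>
         (\<exists>K' m'. misreport_model Xt Zs K' m' \<and>
            (\<forall>x'\<in>Xt \<times> Zs. pobs K' x' = pobs K x') \<and> pstar K' x = t))"
    unfolding x
    using pstar_bounds[OF model xt z hi lo] pstar_bounds_sharp[OF finZ model xt z hi lo]
    by blast
qed

end
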